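(* Let $E_n$ be an $n$-dimensional Euclidean space with inner product $(\cdot,\cdot)$. Let $\Sigma_1,\Sigma_2\subseteq E_n$ be subspaces with bases $\mathbf a_1,\dots,\mathbf a_p$ and $\mathbf b_1,\dots,\mathbf b_q$ respectively, where $p\le q\le n$. If $p<q$, assume in addition that $\mathbf b_1,\dots,\mathbf b_q$ is an orthonormal basis. Let $M$ be the $p\times q$ matrix with entries $M_{ij}=(\mathbf a_i,\mathbf b_j)$, and let $\Gamma_1=\det[(\mathbf a_i,\mathbf a_k)]_{i,k=1}^p$ and $\Gamma_2=\det[(\mathbf b_j,\mathbf b_l)]_{j,l=1}^q$ be the Gram determinants. Then $$\det(MM^T)\le \Gamma_1\,\Gamma_2,$$ and equality holds if and only if $\Sigma_1\subseteq\Sigma_2$. *)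

theory Defs
  imports "HOL-Analysis.Analysis" "Jordan_Normal_Form.Determinant"
begin

definition gram_mat :: "nat \<Rightarrow> (nat \<Rightarrow> 'a::real_inner) \<Rightarrow> real Matrix.mat" where
  "gram_mat m v = Matrix.mat m m (\<lambda>(i,k). inner (v i) (v k))"

definition cross_mat :: "nat \<Rightarrow> nat \<Rightarrow> (nat \<Rightarrow> 'a::real_inner) \<Rightarrow> (nat \<Rightarrow> 'a) \<Rightarrow> real Matrix.mat" where
  "cross_mat p q a b = Matrix.mat p q (\<lambda>(i,j). inner (a i) (b j))"

definition lin_indep_family :: "nat \<Rightarrow> (nat \<Rightarrow> 'a::real_vector) \<Rightarrow> bool" where
  "lin_indep_family m v \<longleftrightarrow> inj_on v {..<m} \<and> independent (v ` {..<m})"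

end

(*
  Orthonormalise. If u is an orthonormal basis of Sigma_1, then a = T u with T = [(a_i, u_k)],
  so M = T [(u_i, b_j)] and Gamma_1 = (det T)^2. When p = q, likewise b = R v with v orthonormal,
  [(u_i, b_j)] = C R^T with C = [(u_i, v_j)] square, and Gamma_2 = (det R)^2; when p < q the b_j
  are orthonormal already, v = b and Gamma_2 = 1. Either way det(M M^T) = Gamma_1 Gamma_2 det(C C^T),
  and C C^T is the Gram matrix of the orthogonal projections P u_i onto Sigma_2. Hadamard's
  inequality gives det(C C^T) <= prod |P u_i|^2 <= 1, and equality forces |P u_i| = |u_i| = 1,
  i.e. every u_i lies in Sigma_2.
*)
theory Submission
  imports Defs
begin

lemma prod_eq_1_imp_eq_1:
  fixes f :: "'b \<Rightarrow> 'a::linordered_semidom"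
  assumes A: "finite A" and f: "\<And>k. k \<in> A \<Longrightarrow> 0 \<le> f k \<and> f k \<le> 1"
    and prod: "prod f A = 1" and i: "i \<in> A"
  shows "f i = 1"
proof -
  have "prod f (A - {i}) \<le> 1"
    using f by (intro prod_le_1) auto
  then have "prod f A \<le> f i"
    using f[OF i] mult_left_mono[of "prod f (A - {i})" 1 "f i"] by (simp add: prod.remove[OF A i])
  then show ?thesis using prod f[OF i] by simp
qed

lemma span_image_lessThan_sum:
  fixes w :: "nat \<Rightarrow> 'a::real_vector"
  assumes "x \<in> span (w ` {..<m})"
  shows "\<exists>c. x = (\<Sum>k<m. c k *\<^sub>R w k)"
  using assms
proof (induction m arbitrary: x)
  case 0
  then show ?case by simp
next
  case (Suc m)
  have "x \<in> span (insert (w m) (w ` {..<m}))"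
    using Suc.prems by (simp add: lessThan_Suc)
  then obtain r where "x - r *\<^sub>R w m \<in> span (w ` {..<m})"
    using span_breakdown_eq by blast
  then obtain c where "x - r *\<^sub>R w m = (\<Sum>k<m. c k *\<^sub>R w k)"
    using Suc.IH by blast
  then have "x = (\<Sum>k<Suc m. (c(m := r)) k *\<^sub>R w k)"
    by (simp add: algebra_simps)
  then show ?case by blast
qed

lemma det_mult_transpose_sandwich:
  assumes T: "T \<in> carrier_mat n n" and X: "X \<in> carrier_mat n n"
  shows "Determinant.det (T * X * transpose_mat T) = (Determinant.det T)\<^sup>2 * Determinant.det X"
  using det_mult[OF mult_carrier_mat[OF T X] transpose_carrier_mat[THEN iffD2, OF T]]
    det_mult[OF T X] det_transpose[OF T]
  by (simp add: power2_eq_square)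

lemma det_mult_transpose_square:
  assumes "A \<in> carrier_mat n n"
  shows "Determinant.det (A * transpose_mat A) = (Determinant.det A)\<^sup>2"
  using det_mult[OF assms transpose_carrier_mat[THEN iffD2, OF assms]] det_transpose[OF assms]
  by (simp add: power2_eq_square)

lemma det_mult_mult_transpose:
  assumes A: "A \<in> carrier_mat n n" and B: "B \<in> carrier_mat n m"
  shows "Determinant.det (A * B * transpose_mat (A * B))
    = (Determinant.det A)\<^sup>2 * Determinant.det (B * transpose_mat B)"
proof -
  have At: "transpose_mat A \<in> carrier_mat n n" and Bt: "transpose_mat B \<in> carrier_mat m n"
    using A B by auto
  have "A * B * transpose_mat (A * B) = A * (B * (transpose_mat B * transpose_mat A))"
    using transpose_mult[OF A B] assoc_mult_mat[OF A B mult_carrier_mat[OF Bt At]] by simp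
  also have "\<dots> = A * (B * transpose_mat B) * transpose_mat A"
    using assoc_mult_mat[OF B Bt At] assoc_mult_mat[OF A mult_carrier_mat[OF B Bt] At] by simp
  finally show ?thesis
    using det_mult_transpose_sandwich[OF A mult_carrier_mat[OF B Bt]] by simp
qed

lemma cross_mat_carrier [simp]: "cross_mat p q a b \<in> carrier_mat p q"
  by (simp add: cross_mat_def)

lemma gram_mat_carrier [simp]: "gram_mat m v \<in> carrier_mat m m"
  by (simp add: gram_mat_def)

lemma cross_mat_mult_left:
  assumes w: "\<And>i. i < n \<Longrightarrow> w i = (\<Sum>k<m. T $$ (i,k) *\<^sub>R v k)"
    and T: "T \<in> carrier_mat n m"
  shows "cross_mat n q w y = T * cross_mat m q v y"
proof (rule eq_matI)
  fix i j assume "i < dim_row (T * cross_mat m q v y)" "j < dim_col (T * cross_mat m q v y)"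
  then have i: "i < n" and j: "j < q" using T by (auto simp: cross_mat_def)
  have "(T * cross_mat m q v y) $$ (i,j) = (\<Sum>k<m. T $$ (i,k) * inner (v k) (y j))"
    using T i j by (simp add: cross_mat_def scalar_prod_def lessThan_atLeast0)
  also have "\<dots> = inner (w i) (y j)" using w[OF i] by (simp add: inner_sum_left)
  finally show "cross_mat n q w y $$ (i,j) = (T * cross_mat m q v y) $$ (i,j)"
    using i j by (simp add: cross_mat_def)
qed (use T in \<open>auto simp: cross_mat_def\<close>)

lemma cross_mat_mult_right:
  assumes w: "\<And>j. j < n \<Longrightarrow> w j = (\<Sum>k<m. R $$ (j,k) *\<^sub>R v k)"
    and R: "R \<in> carrier_mat n m"
  shows "cross_mat p n x w = cross_mat p m x v * transpose_mat R"
proof (rule eq_matI)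
  fix i j assume "i < dim_row (cross_mat p m x v * transpose_mat R)"
    "j < dim_col (cross_mat p m x v * transpose_mat R)"
  then have i: "i < p" and j: "j < n" using R by (auto simp: cross_mat_def)
  have "(cross_mat p m x v * transpose_mat R) $$ (i,j) = (\<Sum>k<m. inner (x i) (v k) * R $$ (j,k))"
    using R i j by (simp add: cross_mat_def scalar_prod_def lessThan_atLeast0)
  also have "\<dots> = inner (x i) (w j)" using w[OF j] by (simp add: inner_sum_right mult.commute)
  finally show "cross_mat p n x w $$ (i,j) = (cross_mat p m x v * transpose_mat R) $$ (i,j)"
    using i j by (simp add: cross_mat_def)
qed (use R in \<open>auto simp: cross_mat_def\<close>)

lemma gram_mat_mult:
  assumes w: "\<And>i. i < n \<Longrightarrow> w i = (\<Sum>k<m. T $$ (i,k) *\<^sub>R v k)"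
    and T: "T \<in> carrier_mat n m"
  shows "gram_mat n w = T * gram_mat m v * transpose_mat T"
proof -
  have "gram_mat n w = T * (gram_mat m v * transpose_mat T)"
    using cross_mat_mult_left[OF w T, of n w] cross_mat_mult_right[OF w T, of m v]
    by (simp add: gram_mat_def cross_mat_def)
  then show ?thesis
    using assoc_mult_mat[OF T gram_mat_carrier[of m v] transpose_carrier_mat[THEN iffD2, OF T]] by simp
qed

lemma det_gram_mat_mult:
  assumes "\<And>i. i < n \<Longrightarrow> w i = (\<Sum>k<n. T $$ (i,k) *\<^sub>R v k)"
    and T: "T \<in> carrier_mat n n"
  shows "Determinant.det (gram_mat n w) = (Determinant.det T)\<^sup>2 * Determinant.det (gram_mat n v)"
  using gram_mat_mult[OF assms] det_mult_transpose_sandwich[OF T gram_mat_carrier] by simp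

lemma det_gram_mat_Suc:
  fixes w :: "nat \<Rightarrow> 'a::real_inner"
  assumes y: "y \<in> span (w ` {..<m})" and z: "\<And>k. k < m \<Longrightarrow> inner z (w k) = 0"
    and wm: "w m = y + z"
  shows "Determinant.det (gram_mat (Suc m) w) = (norm z)\<^sup>2 * Determinant.det (gram_mat m w)"
proof -
  obtain c where c: "y = (\<Sum>k<m. c k *\<^sub>R w k)" using span_image_lessThan_sum[OF y] by blast
  define w' where "w' = w(m := z)"
  define T where "T = Matrix.mat (Suc m) (Suc m)
    (\<lambda>(i,k). if i = m \<and> k < m then c k else if i = k then 1 else (0::real))"
  have T: "T \<in> carrier_mat (Suc m) (Suc m)" by (simp add: T_def)
  have w_T: "w i = (\<Sum>k<Suc m. T $$ (i,k) *\<^sub>R w' k)" if "i < Suc m" for i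
  proof (cases "i = m")
    case True
    then show ?thesis using wm c by (simp add: T_def w'_def)
  next
    case False
    then have "(\<Sum>k<Suc m. T $$ (i,k) *\<^sub>R w' k) = (\<Sum>k<Suc m. if k = i then w i else 0)"
      using that by (intro sum.cong) (auto simp: T_def w'_def)
    then show ?thesis using that by simp
  qed
  have "Determinant.det T = prod_list (diag_mat T)"
    by (rule det_lower_triangular[OF _ T]) (simp add: T_def)
  also have "diag_mat T = map (\<lambda>i. 1) [0..<Suc m]"
    by (simp add: diag_mat_def T_def)
  finally have det_T: "Determinant.det T = 1"
    by (simp add: map_replicate_const del: upt_Suc)
  define G' where "G' = gram_mat (Suc m) w'"
  have G': "G' \<in> carrier_mat (Suc m) (Suc m)" by (simp add: G'_def)
  \<comment> \<open>The last row of G' vanishes off the diagonal, since z is orthogonal to w 0, ..., w (m-1).\<close>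
  have "Determinant.det G' = (\<Sum>j<Suc m. G' $$ (m,j) * cofactor G' m j)"
    using laplace_expansion_row[OF G', of m] by simp
  also have "\<dots> = G' $$ (m,m) * cofactor G' m m"
    using z by (simp add: G'_def gram_mat_def w'_def)
  also have "mat_delete G' m m = gram_mat m w"
    by (rule eq_matI) (auto simp: mat_delete_def G'_def gram_mat_def w'_def)
  then have "cofactor G' m m = Determinant.det (gram_mat m w)"
    by (simp add: cofactor_def)
  finally have "Determinant.det G' = (norm z)\<^sup>2 * Determinant.det (gram_mat m w)"
    by (simp add: G'_def gram_mat_def w'_def power2_norm_eq_inner)
  then show ?thesis
    using det_gram_mat_mult[OF w_T T] det_T by (simp add: G'_def)
qed

lemma det_gram_mat_Hadamard:
  fixes w :: "nat \<Rightarrow> 'a::euclidean_space"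
  shows "0 \<le> Determinant.det (gram_mat m w)
    \<and> Determinant.det (gram_mat m w) \<le> (\<Prod>i<m. (norm (w i))\<^sup>2)"
proof (induction m)
  case 0
  show ?case by (simp add: gram_mat_def det_def)
next
  case (Suc m)
  obtain y z where y: "y \<in> span (w ` {..<m})"
    and z: "\<And>x. x \<in> span (w ` {..<m}) \<Longrightarrow> Linear_Algebra.orthogonal z x" and wm: "w m = y + z"
    using orthogonal_subspace_decomp_exists by blast
  have "inner z (w k) = 0" if "k < m" for k
    using z[of "w k"] that by (auto simp: Linear_Algebra.orthogonal_def span_base)
  then have det_Suc: "Determinant.det (gram_mat (Suc m) w) = (norm z)\<^sup>2 * Determinant.det (gram_mat m w)"
    using det_gram_mat_Suc[OF y _ wm] by blast
  have "(norm (w m))\<^sup>2 = (norm y)\<^sup>2 + (norm z)\<^sup>2"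
    using wm norm_add_Pythagorean[of y z] z[OF y] by (simp add: orthogonal_commute)
  then have "(norm z)\<^sup>2 \<le> (norm (w m))\<^sup>2" by simp
  then have "(norm z)\<^sup>2 * Determinant.det (gram_mat m w) \<le> (norm (w m))\<^sup>2 * (\<Prod>i<m. (norm (w i))\<^sup>2)"
    using Suc.IH by (intro mult_mono) auto
  then show ?case
    using Suc.IH by (simp add: det_Suc mult.commute)
qed

definition orthonormal_family :: "nat \<Rightarrow> (nat \<Rightarrow> 'a::real_inner) \<Rightarrow> bool" where
  "orthonormal_family p u \<longleftrightarrow> (\<forall>i<p. \<forall>k<p. inner (u i) (u k) = (if i = k then 1 else 0))"

lemma gram_mat_orthonormal_family: "orthonormal_family p u \<Longrightarrow> gram_mat p u = 1\<^sub>m p"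
  by (rule eq_matI) (auto simp: orthonormal_family_def gram_mat_def)

lemma orthonormal_family_exists:
  fixes a :: "nat \<Rightarrow> 'a::euclidean_space"
  assumes "lin_indep_family p a"
  obtains u where "orthonormal_family p u" "span (u ` {..<p}) = span (a ` {..<p})"
proof -
  let ?S = "span (a ` {..<p})"
  obtain B where B: "B \<subseteq> ?S" "pairwise Linear_Algebra.orthogonal B"
    "\<And>x. x \<in> B \<Longrightarrow> norm x = 1" "independent B" "card B = dim ?S" "span B = ?S"
    using orthonormal_basis_subspace[of ?S] subspace_span by blast
  have "dim ?S = p" using assms unfolding lin_indep_family_def
    by (simp add: dim_eq_card_independent card_image)
  moreover have "finite B" using B(4) finiteI_independent by blast
  ultimately obtain h where "bij_betw h {0..<p} B"
    using ex_bij_betw_nat_finite B(5) by metis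
  then have h: "bij_betw h {..<p} B" by (simp add: lessThan_atLeast0)
  have "inner (h i) (h k) = (if i = k then 1 else 0)" if "i < p" "k < p" for i k
  proof -
    have "h i \<in> B" "h k \<in> B" "h i = h k \<longleftrightarrow> i = k"
      using h that by (auto simp: bij_betw_def inj_on_def)
    then show ?thesis
      using B(2,3) by (auto simp: pairwise_def Linear_Algebra.orthogonal_def dot_square_norm)
  qed
  then have "orthonormal_family p h" by (simp add: orthonormal_family_def)
  moreover have "h ` {..<p} = B" using h by (simp add: bij_betw_def)
  ultimately show ?thesis using that B(6) by auto
qed

definition orth_proj :: "nat \<Rightarrow> (nat \<Rightarrow> 'a::real_inner) \<Rightarrow> 'a \<Rightarrow> 'a" where
  "orth_proj q v x = (\<Sum>j<q. inner x (v j) *\<^sub>R v j)"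

lemma orth_proj_in_span: "orth_proj q v x \<in> span (v ` {..<q})"
  unfolding orth_proj_def by (intro span_sum span_scale span_base) auto

lemma orthogonal_orth_proj_residual:
  assumes v: "orthonormal_family q v" and y: "y \<in> span (v ` {..<q})"
  shows "Linear_Algebra.orthogonal (x - orth_proj q v x) y"
proof (rule orthogonal_to_span[OF y])
  fix y assume "y \<in> v ` {..<q}"
  then obtain j where j: "j < q" "y = v j" by auto
  have "inner (orth_proj q v x) (v j) = (\<Sum>l<q. inner x (v l) * inner (v l) (v j))"
    by (simp add: orth_proj_def inner_sum_left)
  also have "\<dots> = (\<Sum>l<q. if l = j then inner x (v j) else 0)"
    using v j by (intro sum.cong) (auto simp: orthonormal_family_def)
  finally show "Linear_Algebra.orthogonal (x - orth_proj q v x) y"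
    using j by (simp add: Linear_Algebra.orthogonal_def inner_diff_left)
qed

lemma norm_orth_proj_Pythagoras:
  assumes "orthonormal_family q v"
  shows "(norm x)\<^sup>2 = (norm (orth_proj q v x))\<^sup>2 + (norm (x - orth_proj q v x))\<^sup>2"
  using norm_add_Pythagorean[of "orth_proj q v x" "x - orth_proj q v x"]
    orthogonal_orth_proj_residual[OF assms orth_proj_in_span]
  by (simp add: orthogonal_commute)

lemma orth_proj_eq_self:
  assumes v: "orthonormal_family q v" and x: "x \<in> span (v ` {..<q})"
  shows "orth_proj q v x = x"
proof -
  have "x - orth_proj q v x \<in> span (v ` {..<q})"
    using x orth_proj_in_span by (rule span_diff)
  then have "Linear_Algebra.orthogonal (x - orth_proj q v x) (x - orth_proj q v x)"
    by (rule orthogonal_orth_proj_residual[OF v])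
  then show ?thesis by (simp add: orthogonal_self)
qed

lemma orthonormal_family_expansion:
  assumes "orthonormal_family m u" and "a ` {..<n} \<subseteq> span (u ` {..<m})" and "i < n"
  shows "a i = (\<Sum>k<m. cross_mat n m a u $$ (i,k) *\<^sub>R u k)"
  using orth_proj_eq_self[OF assms(1), of "a i"] assms(2,3) by (auto simp: orth_proj_def cross_mat_def)

lemma det_gram_mat_orthonormal_family:
  assumes u: "orthonormal_family p u" and a: "a ` {..<p} \<subseteq> span (u ` {..<p})"
  shows "Determinant.det (gram_mat p a) = (Determinant.det (cross_mat p p a u))\<^sup>2"
  using det_gram_mat_mult[OF orthonormal_family_expansion[OF u a] cross_mat_carrier]
    gram_mat_orthonormal_family[OF u]
  by simp

lemma det_gram_mat_pos:
  fixes a :: "nat \<Rightarrow> 'a::euclidean_space"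
  assumes a: "lin_indep_family p a"
  shows "0 < Determinant.det (gram_mat p a)"
proof -
  obtain u where u: "orthonormal_family p u" and span_u: "span (u ` {..<p}) = span (a ` {..<p})"
    using orthonormal_family_exists[OF a] by blast
  have "\<forall>k. \<exists>c. k < p \<longrightarrow> u k = (\<Sum>i<p. c i *\<^sub>R a i)"
    using span_image_lessThan_sum span_u span_base by (metis image_eqI lessThan_iff)
  then obtain c where c: "\<And>k. k < p \<Longrightarrow> u k = (\<Sum>i<p. c k i *\<^sub>R a i)"
    by metis
  define S where "S = Matrix.mat p p (\<lambda>(k,i). c k i)"
  have "u k = (\<Sum>i<p. S $$ (k,i) *\<^sub>R a i)" if "k < p" for k
    using c[OF that] that by (simp add: S_def)
  then have "1 = (Determinant.det S)\<^sup>2 * Determinant.det (gram_mat p a)"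
    using det_gram_mat_mult[of p u S a] gram_mat_orthonormal_family[OF u] by (simp add: S_def)
  then have "Determinant.det (gram_mat p a) \<noteq> 0" by auto
  then show ?thesis using det_gram_mat_Hadamard[of p a] by simp
qed

lemma det_cross_mat_orthonormal_families:
  fixes u v :: "nat \<Rightarrow> 'a::euclidean_space"
  assumes u: "orthonormal_family p u" and v: "orthonormal_family q v"
  defines "C \<equiv> cross_mat p q u v"
  shows "Determinant.det (C * transpose_mat C) \<le> 1"
    and "Determinant.det (C * transpose_mat C) = 1 \<longleftrightarrow> span (u ` {..<p}) \<subseteq> span (v ` {..<q})"
proof -
  define P where "P i = orth_proj q v (u i)" for i
  have "P i = (\<Sum>k<q. C $$ (i,k) *\<^sub>R v k)" if "i < p" for i
    using that by (simp add: P_def orth_proj_def C_def cross_mat_def)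
  from gram_mat_mult[OF this] have gram_P: "gram_mat p P = C * transpose_mat C"
    using gram_mat_orthonormal_family[OF v] by (simp add: C_def)
  have Pythagoras: "1 = (norm (P i))\<^sup>2 + (norm (u i - P i))\<^sup>2" if "i < p" for i
    using norm_orth_proj_Pythagoras[OF v, of "u i"] u that
    by (simp add: P_def orthonormal_family_def power2_norm_eq_inner)
  then have P_le_1: "(norm (P i))\<^sup>2 \<le> 1" if "i < p" for i
    using that by (smt (verit) zero_le_power2)
  have det_le_prod: "Determinant.det (C * transpose_mat C) \<le> (\<Prod>i<p. (norm (P i))\<^sup>2)"
    using det_gram_mat_Hadamard[of p P] gram_P by simp
  also have prod_le: "\<dots> \<le> 1"
    using P_le_1 by (intro prod_le_1) auto
  finally show "Determinant.det (C * transpose_mat C) \<le> 1" .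
  show "Determinant.det (C * transpose_mat C) = 1 \<longleftrightarrow> span (u ` {..<p}) \<subseteq> span (v ` {..<q})"
  proof
    assume "Determinant.det (C * transpose_mat C) = 1"
    then have prod_eq_1: "(\<Prod>i<p. (norm (P i))\<^sup>2) = 1"
      using det_le_prod prod_le by linarith
    have "(norm (P i))\<^sup>2 = 1" if "i < p" for i
      by (rule prod_eq_1_imp_eq_1[OF _ _ prod_eq_1]) (use P_le_1 that in auto)
    then have "u i = P i" if "i < p" for i
      using Pythagoras[OF that] that by simp
    then have "u ` {..<p} \<subseteq> span (v ` {..<q})"
      using orth_proj_in_span unfolding P_def by (metis image_subsetI lessThan_iff)
    then show "span (u ` {..<p}) \<subseteq> span (v ` {..<q})"
      using span_minimal subspace_span by blast
  next
    assume span_le: "span (u ` {..<p}) \<subseteq> span (v ` {..<q})"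
    have "P i = u i" if "i < p" for i
      unfolding P_def using that span_le by (intro orth_proj_eq_self[OF v]) (auto intro: span_base)
    then have "gram_mat p P = gram_mat p u" by (auto simp: gram_mat_def intro!: eq_matI)
    then show "Determinant.det (C * transpose_mat C) = 1"
      using gram_P gram_mat_orthonormal_family[OF u] by simp
  qed
qed

lemma det_cross_mat_orthonormal_left:
  assumes u: "orthonormal_family p u" and a: "a ` {..<p} \<subseteq> span (u ` {..<p})"
  shows "Determinant.det (cross_mat p q a b * transpose_mat (cross_mat p q a b))
    = Determinant.det (gram_mat p a) * Determinant.det (cross_mat p q u b * transpose_mat (cross_mat p q u b))"
proof -
  have "cross_mat p q a b = cross_mat p p a u * cross_mat p q u b"
    using cross_mat_mult_left[OF orthonormal_family_expansion[OF u a] cross_mat_carrier] .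
  then show ?thesis
    using det_mult_mult_transpose[OF cross_mat_carrier cross_mat_carrier]
      det_gram_mat_orthonormal_family[OF u a] by simp
qed

lemma det_cross_mat_square_orthonormal_right:
  assumes v: "orthonormal_family p v" and b: "b ` {..<p} \<subseteq> span (v ` {..<p})"
  shows "Determinant.det (cross_mat p p x b * transpose_mat (cross_mat p p x b))
    = Determinant.det (gram_mat p b) * Determinant.det (cross_mat p p x v * transpose_mat (cross_mat p p x v))"
proof -
  let ?C = "cross_mat p p x v" and ?R = "cross_mat p p b v"
  have "cross_mat p p x b = ?C * transpose_mat ?R"
    using cross_mat_mult_right[OF orthonormal_family_expansion[OF v b] cross_mat_carrier] .
  then have "Determinant.det (cross_mat p p x b) = Determinant.det ?C * Determinant.det ?R"
    using det_mult[of ?C p "transpose_mat ?R"] det_transpose[of ?R p] by simp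
  then show ?thesis
    using det_mult_transpose_square[OF cross_mat_carrier[of p p x b]]
      det_mult_transpose_square[OF cross_mat_carrier[of p p x v]]
      det_gram_mat_orthonormal_family[OF v b]
    by (simp add: power_mult_distrib)
qed

theorem theorem1p1:
  fixes a b :: "nat \<Rightarrow> 'a::euclidean_space" and p q :: nat
  assumes "p \<le> q" and "q \<le> DIM('a)"
    and "lin_indep_family p a" and "lin_indep_family q b"
    and "p < q \<Longrightarrow> (\<forall>j<q. \<forall>l<q. inner (b j) (b l) = (if j = l then 1 else 0))"
  shows "Determinant.det (cross_mat p q a b * transpose_mat (cross_mat p q a b))
           \<le> Determinant.det (gram_mat p a) * Determinant.det (gram_mat q b)
      \<and> (Determinant.det (cross_mat p q a b * transpose_mat (cross_mat p q a b))
           = Determinant.det (gram_mat p a) * Determinant.det (gram_mat q b)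
         \<longleftrightarrow> span (a ` {..<p}) \<subseteq> span (b ` {..<q}))"
proof -
  obtain u where u: "orthonormal_family p u" and span_u: "span (u ` {..<p}) = span (a ` {..<p})"
    using orthonormal_family_exists[OF assms(3)] by blast
  have a_u: "a ` {..<p} \<subseteq> span (u ` {..<p})" unfolding span_u by (rule span_superset)
  obtain v where v: "orthonormal_family q v" and span_v: "span (v ` {..<q}) = span (b ` {..<q})"
    and factor: "Determinant.det (cross_mat p q a b * transpose_mat (cross_mat p q a b))
      = Determinant.det (gram_mat p a) * Determinant.det (gram_mat q b)
        * Determinant.det (cross_mat p q u v * transpose_mat (cross_mat p q u v))"
  proof (cases "p < q")
    case True
    then have b: "orthonormal_family q b" using assms(5) by (simp add: orthonormal_family_def)
    show ?thesis
      using that[OF b refl] det_cross_mat_orthonormal_left[OF u a_u]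
      by (simp add: gram_mat_orthonormal_family[OF b])
  next
    case False
    then have "q = p" using assms(1) by simp
    obtain v where v: "orthonormal_family q v" and span_v: "span (v ` {..<q}) = span (b ` {..<q})"
      using orthonormal_family_exists[OF assms(4)] by blast
    have "b ` {..<q} \<subseteq> span (v ` {..<q})" unfolding span_v by (rule span_superset)
    then show ?thesis
      using that[OF v span_v] det_cross_mat_orthonormal_left[OF u a_u]
        det_cross_mat_square_orthonormal_right[OF v] \<open>q = p\<close> by simp
  qed
  define g where "g = Determinant.det (gram_mat p a) * Determinant.det (gram_mat q b)"
  define X where "X = Determinant.det (cross_mat p q u v * transpose_mat (cross_mat p q u v))"
  have "0 < g"
    using det_gram_mat_pos[OF assms(3)] det_gram_mat_pos[OF assms(4)] by (simp add: g_def)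
  moreover have "X \<le> 1" and "X = 1 \<longleftrightarrow> span (a ` {..<p}) \<subseteq> span (b ` {..<q})"
    using det_cross_mat_orthonormal_families[OF u v] span_u span_v by (simp_all add: X_def)
  ultimately show ?thesis
    unfolding factor g_def[symmetric] X_def[symmetric] by (simp add: mult_le_cancel_left1)
qed

end
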